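(* In the lower-bound instance for CTS-G described in the context, for any round $t>T/2$ such that $K_{t-1}\le0.5\,m(t-H)$, we have $|\bar G_t|\ge\frac m2$, where $\bar G_t:=\{a\in G: n_{a,t}\ge H\}$.
   Context: Top-$m$ instance: $N$ base arms with $N\ge400m$, $m\ge1$; every round any $m$ of the $N$ arms may be played. A set $G\subset[N]$ with $|G|=m$ is fixed; rewards are deterministic: $r_a=\Delta$ for $a\in G$ and $r_a=0$ otherwise, with $\Delta:=\frac45\sqrt{\frac{N\ln T}{T}}$ and $T>\frac{16}{25}N\ln T$. The agent runs CTS-G with $\gamma=1$: in round $t$ draw independently $w_{a,t}\sim\mathcal{N}\big(\hat r_{a,n_{a,t}},\frac{m\ln t}{n_{a,t}+1}\big)$ and play the $m$ arms with largest $w_{a,t}$; $n_{a,t}$ is the number of plays of $a$ in rounds $1,\dots,t-1$, $\hat r_{a,n_{a,t}}$ its empirical mean ($0$ if unplayed). $k_s$ is the number of arms of $[N]\setminus G$ played in round $s$, $K_{t-1}:=\sum_{s=1}^{t-1}k_s$, and $H:=\lceil64m\ln T/\Delta^2\rceil$. *)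

theory Defs
  imports Complex_Main
begin

text \<open>A (sample path of) the play sequence is A :: nat => nat set,
  A s = set of arms played in round s (s >= 1). CTS-G plays in round s the m arms with
  the largest samples w s a; since Gaussian samples have full support on the reals,
  a sample path is described by an arbitrary real sample vector w s with A s being
  a top-m set for w s.\<close>

definition ctsg_path :: "nat \<Rightarrow> nat \<Rightarrow> (nat \<Rightarrow> nat \<Rightarrow> real) \<Rightarrow> (nat \<Rightarrow> nat set) \<Rightarrow> bool" where
  "ctsg_path N m w A \<longleftrightarrow>
     (\<forall>s\<ge>1. A s \<subseteq> {1..N} \<and> card (A s) = m \<and>
        (\<forall>a\<in>A s. \<forall>b\<in>{1..N} - A s. w s b \<le> w s a))"

definition plays :: "(nat \<Rightarrow> nat set) \<Rightarrow> nat \<Rightarrow> nat \<Rightarrow> nat" where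
  "plays A a t = card {s \<in> {1..<t}. a \<in> A s}"

text \<open>k_s: number of arms outside G played in round s; K_{t-1} = sum_{s=1}^{t-1} k_s.\<close>
definition Kbad :: "(nat \<Rightarrow> nat set) \<Rightarrow> nat set \<Rightarrow> nat \<Rightarrow> nat" where
  "Kbad A G t = (\<Sum>s\<in>{1..<t}. card (A s - G))"

definition gap :: "nat \<Rightarrow> nat \<Rightarrow> real" where
  "gap N T = 4/5 * sqrt (real N * ln (real T) / real T)"

definition Hth :: "nat \<Rightarrow> nat \<Rightarrow> nat \<Rightarrow> nat" where
  "Hth N m T = nat \<lceil>64 * real m * ln (real T) / (gap N T)^2\<rceil>"

end

theory Submission
  imports Defs
begin

text \<open>Counting the \<open>m\<close> plays of every round gives
  \<open>\<Sum>\<^bsub>a\<in>G\<^esub> n\<^sub>a\<^sub>,\<^sub>t + K\<^sub>t\<^sub>-\<^sub>1 = m(t - 1)\<close>, so the hypothesis on \<open>K\<^sub>t\<^sub>-\<^sub>1\<close> leaves at least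
  \<open>m(t - 1) - m(t - H)/2\<close> plays to the good arms. Every arm has at most \<open>t - 1\<close> plays,
  and one with fewer than \<open>H\<close> plays has at most \<open>H - 1\<close>; so if \<open>g\<close> good arms reach \<open>H\<close>,
  then \<open>(m - g)(t - H) \<le> m(t - H)/2\<close>, i.e. \<open>g \<ge> m/2\<close> provided \<open>H < t\<close>. The latter holds
  because the choice of \<open>\<Delta>\<close> makes \<open>H < 100mT/N + 1 \<le> T/4 + 1\<close>, while \<open>t > T/2\<close> and the
  lower bound on \<open>T\<close> force \<open>T \<ge> 4\<close> unless \<open>T = 1\<close>.\<close>

lemma sum_plays_eq_sum_card_Int:
  assumes "finite G"
  shows "(\<Sum>a\<in>G. plays A a t) = (\<Sum>s\<in>{1..<t}. card (A s \<inter> G))"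
proof -
  have "(\<Sum>a\<in>G. plays A a t) = (\<Sum>a\<in>G. \<Sum>s\<in>{1..<t}. if a \<in> A s then 1 else 0::nat)"
    unfolding plays_def by (simp add: sum.If_cases Int_def)
  also have "\<dots> = (\<Sum>s\<in>{1..<t}. \<Sum>a\<in>G. if a \<in> A s then 1 else 0::nat)"
    by (rule sum.swap)
  also have "\<dots> = (\<Sum>s\<in>{1..<t}. card (A s \<inter> G))"
    using assms by (intro sum.cong) (auto simp: sum.If_cases Int_def conj_commute)
  finally show ?thesis .
qed

lemma sum_plays_add_Kbad:
  assumes "finite G" and "\<And>s. s \<in> {1..<t} \<Longrightarrow> finite (A s) \<and> card (A s) = m"
  shows "(\<Sum>a\<in>G. plays A a t) + Kbad A G t = m * (t - 1)"
proof -
  have "(\<Sum>a\<in>G. plays A a t) + Kbad A G t = (\<Sum>s\<in>{1..<t}. card (A s \<inter> G) + card (A s - G))"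
    unfolding sum_plays_eq_sum_card_Int[OF assms(1)] Kbad_def by (simp add: sum.distrib)
  also have "\<dots> = (\<Sum>s\<in>{1..<t}. m)"
  proof (rule sum.cong[OF refl])
    fix s assume "s \<in> {1..<t}"
    then have "finite (A s)" "card (A s) = m" using assms(2) by auto
    then show "card (A s \<inter> G) + card (A s - G) = m"
      using card_Int_Diff[of "A s" G] by simp
  qed
  finally show ?thesis by simp
qed

lemma plays_less:
  assumes "t \<ge> 1"
  shows "plays A a t < t"
proof -
  have "plays A a t \<le> card {1..<t}"
    unfolding plays_def by (rule card_mono) auto
  with assms show ?thesis by simp
qed

lemma card_threshold_ge_half:
  fixes f :: "'a \<Rightarrow> nat"
  assumes "finite G" and "\<And>a. a \<in> G \<Longrightarrow> f a < t" and "H < t"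
    and "real (card G) * (real t - 1) - real (card G) * (real t - real H) / 2
           \<le> (\<Sum>a\<in>G. real (f a))"
  shows "real (card G) / 2 \<le> real (card {a \<in> G. H \<le> f a})"
proof -
  define B where "B = {a \<in> G. H \<le> f a}"
  define n g where "n = real (card G)" and "g = real (card B)"
  have "B \<subseteq> G" "finite B" using assms(1) by (auto simp: B_def)
  have "(\<Sum>a\<in>B. real (f a)) \<le> (\<Sum>a\<in>B. real t - 1)"
    using assms(2) by (intro sum_mono) (force simp: B_def Suc_le_eq simp flip: of_nat_Suc)
  then have large: "(\<Sum>a\<in>B. real (f a)) \<le> g * (real t - 1)"
    by (simp add: g_def)
  have "(\<Sum>a\<in>G - B. real (f a)) \<le> (\<Sum>a\<in>G - B. real H - 1)"
    by (intro sum_mono) (auto simp: B_def)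
  moreover have "real (card (G - B)) = n - g"
    using card_Diff_subset[OF \<open>finite B\<close> \<open>B \<subseteq> G\<close>] card_mono[OF assms(1) \<open>B \<subseteq> G\<close>]
    by (simp add: n_def g_def of_nat_diff)
  ultimately have small: "(\<Sum>a\<in>G - B. real (f a)) \<le> (n - g) * (real H - 1)"
    by simp
  have "(\<Sum>a\<in>G. real (f a)) = (\<Sum>a\<in>G - B. real (f a)) + (\<Sum>a\<in>B. real (f a))"
    by (rule sum.subset_diff[OF \<open>B \<subseteq> G\<close> assms(1)])
  with assms(4) large small
  have "n * (real t - 1) - n * (real t - real H) / 2 \<le> g * (real t - 1) + (n - g) * (real H - 1)"
    by (simp add: n_def)
  then have "(n - g) * (real t - real H) \<le> (n / 2) * (real t - real H)"
    by (simp add: field_simps)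
  moreover have "real t - real H > 0" using assms(3) by simp
  ultimately have "n - g \<le> n / 2"
    by (rule mult_right_le_imp_le)
  then show ?thesis
    by (simp add: n_def g_def B_def)
qed

lemma Hth_argument_le:
  assumes "N \<ge> 400 * m"
  shows "64 * real m * ln (real T) / (gap N T)\<^sup>2 \<le> real T / 4"
proof (cases "real N * ln (real T) / real T > 0")
  case pos: True
  then have "real T > 0"
    by (cases "T = 0") auto
  with pos have "real N * ln (real T) > 0"
    by (simp add: zero_less_divide_iff)
  then have "real N > 0" "ln (real T) > 0"
    by (simp_all add: zero_less_mult_iff)
  have gap_sq: "(gap N T)\<^sup>2 = 16/25 * (real N * ln (real T) / real T)"
    unfolding gap_def power_mult_distrib real_sqrt_pow2[OF less_imp_le[OF pos]]
    by (simp add: power_divide)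
  have "64 * real m * ln (real T) / (gap N T)\<^sup>2 = 100 * real m * real T / real N"
    unfolding gap_sq using \<open>ln (real T) > 0\<close> \<open>real N > 0\<close> \<open>real T > 0\<close>
    by (simp add: field_simps)
  also have "\<dots> \<le> real T / 4"
    using assms \<open>real N > 0\<close> \<open>real T > 0\<close> by (simp add: field_simps)
  finally show ?thesis .
next
  case False
  have "ln (real T) \<ge> 0"
    by (cases "T = 0") auto
  with False have "real N * ln (real T) / real T = 0"
    by (metis divide_nonneg_nonneg less_eq_real_def mult_nonneg_nonneg of_nat_0_le_iff)
  then have "gap N T = 0"
    unfolding gap_def by simp
  then show ?thesis by simp
qed

lemma Hth_less:
  assumes "N \<ge> 400 * m"
  shows "real (Hth N m T) < real T / 4 + 1"
proof -
  let ?x = "64 * real m * ln (real T) / (gap N T)\<^sup>2"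
  have "real (Hth N m T) < max 0 ?x + 1"
    unfolding Hth_def by linarith
  moreover have "max 0 ?x \<le> real T / 4"
    using Hth_argument_le[OF assms, of T] by (simp add: max_def)
  ultimately show ?thesis by linarith
qed

lemma Hth_less_half:
  assumes "m \<ge> 1" and "N \<ge> 400 * m" and "real T > 16/25 * real N * ln (real T)"
  shows "real (Hth N m T) < real T / 2"
proof (cases "T \<ge> 2")
  case True
  have "ln (real T) \<ge> 1/2"
  proof -
    have "ln (1 / real T) \<le> 1 / real T - 1" using True by (intro ln_le_minus_one) auto
    moreover have "ln (1 / real T) = - ln (real T)" using True by (simp add: ln_div)
    moreover have "1 / real T \<le> 1/2" using True by simp
    ultimately show ?thesis by linarith
  qed
  then have "16/25 * real N * ln (real T) \<ge> 16/25 * 400 * (1/2)"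
    using assms(1,2) by (intro mult_mono) auto
  with assms(3) have "real T \<ge> 4" by linarith
  with Hth_less[OF assms(2), of T] show ?thesis by linarith
next
  case False
  with assms(3) have "T = 1" by (cases T) auto
  \<comment> \<open>then \<open>ln T = 0\<close>, so \<open>gap N T = 0\<close> and \<open>H = 0\<close> through division by zero\<close>
  then show ?thesis by (simp add: Hth_def gap_def)
qed

theorem lemma7:
  fixes N m T t :: nat and G :: "nat set"
    and w :: "nat \<Rightarrow> nat \<Rightarrow> real" and A :: "nat \<Rightarrow> nat set"
  assumes "m \<ge> 1" and "N \<ge> 400 * m"
    and "real T > 16/25 * real N * ln (real T)"
    and "G \<subseteq> {1..N}" and "card G = m"
    and "ctsg_path N m w A"
    and "real t > real T / 2" and "t \<le> T"
    and "real (Kbad A G t) \<le> 0.5 * real m * (real t - real (Hth N m T))"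
  shows "real (card {a \<in> G. plays A a t \<ge> Hth N m T}) \<ge> real m / 2"
proof -
  have "finite G" using assms(4) finite_subset by blast
  have "Hth N m T < t" using Hth_less_half[OF assms(1-3)] assms(7) by linarith
  then have "t \<ge> 1" by simp
  have "\<And>s. s \<in> {1..<t} \<Longrightarrow> finite (A s) \<and> card (A s) = m"
    using assms(6) unfolding ctsg_path_def
    by (metis atLeastLessThan_iff finite_atLeastAtMost finite_subset)
  from sum_plays_add_Kbad[OF \<open>finite G\<close> this]
  have "real ((\<Sum>a\<in>G. plays A a t) + Kbad A G t) = real (m * (t - 1))"
    by (simp only:)
  then have "(\<Sum>a\<in>G. real (plays A a t)) + real (Kbad A G t) = real m * (real t - 1)"
    using \<open>t \<ge> 1\<close> by (simp add: of_nat_diff)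
  with assms(9) have "real m * (real t - 1) - real m * (real t - real (Hth N m T)) / 2
                        \<le> (\<Sum>a\<in>G. real (plays A a t))"
    by simp
  from card_threshold_ge_half[OF \<open>finite G\<close> plays_less[OF \<open>t \<ge> 1\<close>] \<open>Hth N m T < t\<close>]
    this assms(5)
  show ?thesis by simp
qed

end
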